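(* Let $P$ be a finite poset and fix a real number $q\geq 0$. For $p\in P$ let $T_p^q\colon \mathcal{J}(P)\to\mathbb{R}$ be the statistic $T_p^q\coloneqq T_p^+-q\,T_p^-$. Then the statistics $T_p^q$ ($p\in P$) are linearly independent over $\mathbb{R}$, and they are also linearly independent from the constant function $1$ (i.e., $1\notin\operatorname{span}_{\mathbb{R}}\{T_p^q\colon p\in P\}$).
   Context: $\mathcal{J}(P)$ denotes the set of order ideals (downward-closed subsets) of $P$. For $p\in P$ and $I\in\mathcal{J}(P)$: $T_p^+(I)=1$ if $p$ is a minimal element of $P\setminus I$ and $0$ otherwise; $T_p^-(I)=1$ if $p$ is a maximal element of $I$ and $0$ otherwise. *)

theory Defs
  imports Complex_Main
begin

text \<open>A finite poset is represented by a finite carrier set P of a type with a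
partial order; the poset structure is the restriction of that order to P.\<close>

definition order_ideals :: "'a::order set \<Rightarrow> 'a set set" where
  "order_ideals P = {I. I \<subseteq> P \<and> (\<forall>x\<in>I. \<forall>y\<in>P. y \<le> x \<longrightarrow> y \<in> I)}"

definition T_plus :: "'a::order set \<Rightarrow> 'a \<Rightarrow> 'a set \<Rightarrow> real" where
  "T_plus P p I = (if p \<in> P - I \<and> (\<forall>y\<in>P - I. y \<le> p \<longrightarrow> y = p) then 1 else 0)"

definition T_minus :: "'a::order set \<Rightarrow> 'a \<Rightarrow> 'a set \<Rightarrow> real" where
  "T_minus P p I = (if p \<in> I \<and> (\<forall>y\<in>I. p \<le> y \<longrightarrow> y = p) then 1 else 0)"

definition T_q :: "'a::order set \<Rightarrow> real \<Rightarrow> 'a \<Rightarrow> 'a set \<Rightarrow> real" where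
  "T_q P q p I = T_plus P p I - q * T_minus P p I"

end

theory Submission
  imports Defs
begin

text \<open>For \<open>q > 0\<close> weight an order ideal \<open>I\<close> by \<open>q\<^sup>-\<^sup>|\<^sup>I\<^sup>|\<close>. Adding \<open>p\<close> to the ideals in
  which \<open>p\<close> is minimal outside is a bijection onto the ideals in which \<open>p\<close> is maximal and
  divides the weight by \<open>q\<close>, so every \<open>T\<^sub>p\<^sup>q\<close> has weighted sum \<open>0\<close>, whereas the constant \<open>1\<close>
  has positive weighted sum. Given a vanishing combination, let \<open>m\<close> be maximal among the
  \<open>p\<close> with nonzero coefficient and restrict to the ideals avoiding the up-set of \<open>m\<close>: on
  them every other \<open>T\<^sub>p\<^sup>q\<close> with nonzero coefficient is the corresponding statistic of the
  smaller poset and has weighted sum \<open>0\<close>, while \<open>T\<^sub>m\<^sup>q\<close> is nonnegative and equals \<open>1\<close> on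
  \<open>{y. y < m}\<close>, so the coefficient of \<open>m\<close> vanishes. For \<open>q = 0\<close>, evaluating at the complement
  of the up-set of \<open>p\<close> isolates \<open>T\<^sub>p\<^sup>+\<close>, and every \<open>T\<^sub>p\<^sup>+\<close> vanishes on \<open>P\<close> itself.\<close>

lemma finite_order_ideals: "finite P \<Longrightarrow> finite (order_ideals P)"
  by (rule finite_subset[of _ "Pow P"]) (auto simp: order_ideals_def)

lemma order_ideals_mono: "D \<in> order_ideals P \<Longrightarrow> order_ideals D \<subseteq> order_ideals P"
  unfolding order_ideals_def by (auto 4 3)

lemma not_above_in_order_ideals: "{y \<in> P. \<not> m \<le> y} \<in> order_ideals P"
  unfolding order_ideals_def by (auto dest: order_trans)

lemma below_in_order_ideals: "{y \<in> P. y < m} \<in> order_ideals P"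
  unfolding order_ideals_def by (auto dest: order_le_less_trans)

lemma T_plus_eq_1_iff:
  "T_plus P p I = 1 \<longleftrightarrow> p \<in> P - I \<and> (\<forall>y\<in>P - I. y \<le> p \<longrightarrow> y = p)"
  by (simp add: T_plus_def)

lemma T_minus_eq_1_iff:
  "T_minus P p I = 1 \<longleftrightarrow> p \<in> I \<and> (\<forall>y\<in>I. p \<le> y \<longrightarrow> y = p)"
  by (simp add: T_minus_def)

lemma T_plus_whole: "T_plus P p P = 0"
  by (simp add: T_plus_def)

lemma T_plus_not_above:
  assumes "p \<in> P" and "p' \<in> P"
  shows "T_plus P p' {y \<in> P. \<not> p \<le> y} = (if p' = p then 1 else 0)"
  using assms by (auto simp: T_plus_def dest: antisym)

lemma T_q_nonneg: "p \<notin> I \<Longrightarrow> T_q P q p I \<ge> 0"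
  by (simp add: T_q_def T_plus_def T_minus_def)

lemma T_q_below: "m \<in> P \<Longrightarrow> T_q P q m {y \<in> P. y < m} = 1"
  by (auto simp: T_q_def T_plus_def T_minus_def less_le)

lemma T_q_restrict:
  assumes "D \<in> order_ideals P" and "p \<in> D"
  shows "T_q P q p I = T_q D q p I"
proof -
  have "D \<subseteq> P" and "\<And>y. y \<in> P \<Longrightarrow> y \<le> p \<Longrightarrow> y \<in> D"
    using assms unfolding order_ideals_def by auto
  then have "T_plus P p I = T_plus D p I"
    unfolding T_plus_def using assms(2) by auto
  then show ?thesis
    unfolding T_q_def T_minus_def by simp
qed

lemma bij_betw_insert_T_plus_T_minus:
  "bij_betw (insert p) {I \<in> order_ideals P. T_plus P p I = 1} {J \<in> order_ideals P. T_minus P p J = 1}"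
proof (rule bij_betw_byWitness[where f' = "\<lambda>J. J - {p}"])
  show "insert p ` {I \<in> order_ideals P. T_plus P p I = 1} \<subseteq> {J \<in> order_ideals P. T_minus P p J = 1}"
  proof clarify
    fix I assume "I \<in> order_ideals P" and "T_plus P p I = 1"
    then have ideal: "I \<subseteq> P" "\<And>x y. x \<in> I \<Longrightarrow> y \<in> P \<Longrightarrow> y \<le> x \<Longrightarrow> y \<in> I"
      and p: "p \<in> P" "p \<notin> I" "\<And>y. y \<in> P - I \<Longrightarrow> y \<le> p \<Longrightarrow> y = p"
      unfolding order_ideals_def T_plus_eq_1_iff by auto
    have "insert p I \<in> order_ideals P"
      unfolding order_ideals_def using ideal p by blast
    moreover have "T_minus P p (insert p I) = 1"
      unfolding T_minus_eq_1_iff using ideal p by blast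
    ultimately show "insert p I \<in> order_ideals P \<and> T_minus P p (insert p I) = 1" ..
  qed
  show "(\<lambda>J. J - {p}) ` {J \<in> order_ideals P. T_minus P p J = 1} \<subseteq> {I \<in> order_ideals P. T_plus P p I = 1}"
    unfolding order_ideals_def T_plus_eq_1_iff T_minus_eq_1_iff by auto
qed (auto simp: T_plus_eq_1_iff T_minus_eq_1_iff)

definition ideal_weighted_sum :: "'a::order set \<Rightarrow> real \<Rightarrow> ('a set \<Rightarrow> real) \<Rightarrow> real" where
  "ideal_weighted_sum P q f = (\<Sum>I\<in>order_ideals P. inverse q ^ card I * f I)"

lemma ideal_weighted_sum_linear_combination:
  "ideal_weighted_sum P q (\<lambda>I. \<Sum>p\<in>S. c p * f p I) = (\<Sum>p\<in>S. c p * ideal_weighted_sum P q (f p))"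
  unfolding ideal_weighted_sum_def by (simp add: sum_distrib_left sum.swap[of _ S] algebra_simps)

lemma ideal_weighted_sum_pos:
  fixes q :: real
  assumes "finite P" and "q > 0"
    and "\<And>I. I \<in> order_ideals P \<Longrightarrow> f I \<ge> 0" and "I\<^sub>0 \<in> order_ideals P" and "f I\<^sub>0 > 0"
  shows "ideal_weighted_sum P q f > 0"
  unfolding ideal_weighted_sum_def
  by (rule sum_pos2[OF finite_order_ideals[OF assms(1)] assms(4)]) (use assms in auto)

lemma ideal_weighted_sum_T_q:
  fixes q :: real
  assumes "finite P" and "q > 0"
  shows "ideal_weighted_sum P q (T_q P q p) = 0"
proof -
  define w where "w I = inverse q ^ card I" for I :: "'a set"
  define A where "A = {I \<in> order_ideals P. T_plus P p I = 1}"
  define B where "B = {J \<in> order_ideals P. T_minus P p J = 1}"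
  have fin: "finite (order_ideals P)"
    using assms(1) by (rule finite_order_ideals)
  have plus: "ideal_weighted_sum P q (T_plus P p) = (\<Sum>I\<in>A. w I)"
    unfolding ideal_weighted_sum_def A_def sum.inter_filter[OF fin]
    by (rule sum.cong) (auto simp: w_def T_plus_def)
  have minus: "ideal_weighted_sum P q (T_minus P p) = (\<Sum>J\<in>B. w J)"
    unfolding ideal_weighted_sum_def B_def sum.inter_filter[OF fin]
    by (rule sum.cong) (auto simp: w_def T_minus_def)
  have weight_insert: "w I = q * w (insert p I)" if "I \<in> A" for I
  proof -
    have "finite I" "p \<notin> I"
      using that assms(1) unfolding A_def order_ideals_def T_plus_eq_1_iff by (auto intro: finite_subset)
    then show ?thesis
      unfolding w_def using assms(2) by simp
  qed
  have "(\<Sum>I\<in>A. w I) = q * (\<Sum>I\<in>A. w (insert p I))"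
    by (simp add: weight_insert sum_distrib_left)
  also have "\<dots> = q * (\<Sum>J\<in>B. w J)"
    using sum.reindex_bij_betw[OF bij_betw_insert_T_plus_T_minus, of w p P]
    unfolding A_def B_def by simp
  finally have "ideal_weighted_sum P q (T_plus P p) = q * ideal_weighted_sum P q (T_minus P p)"
    using plus minus by simp
  then show ?thesis
    unfolding T_q_def ideal_weighted_sum_def
    by (simp add: algebra_simps sum_subtractf sum_distrib_left)
qed

lemma T_q_linear_independent:
  fixes q :: real and c :: "'a::order \<Rightarrow> real"
  assumes "finite P" and "q > 0"
    and vanish: "\<forall>I\<in>order_ideals P. (\<Sum>p\<in>P. c p * T_q P q p I) = 0"
  shows "\<forall>p\<in>P. c p = 0"
proof (rule ccontr)
  assume "\<not> (\<forall>p\<in>P. c p = 0)"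
  then have "{p \<in> P. c p \<noteq> 0} \<noteq> {}"
    by blast
  then obtain m where "m \<in> {p \<in> P. c p \<noteq> 0}" and "\<forall>p\<in>{p \<in> P. c p \<noteq> 0}. m \<le> p \<longrightarrow> m = p"
    using finite_has_maximal[of "{p \<in> P. c p \<noteq> 0}"] assms(1) by auto
  then have m: "m \<in> P" "c m \<noteq> 0" and maximal: "\<And>p. p \<in> P \<Longrightarrow> c p \<noteq> 0 \<Longrightarrow> m \<le> p \<Longrightarrow> p = m"
    by auto
  define D where "D = {y \<in> P. \<not> m \<le> y}"
  have D: "D \<in> order_ideals P" and "finite D" and "m \<notin> D" and "insert m D \<subseteq> P"
    using not_above_in_order_ideals assms(1) m(1) by (auto simp: D_def)
  have split: "(\<Sum>p\<in>P. c p * T_q P q p I) = c m * T_q P q m I + (\<Sum>p\<in>D. c p * T_q D q p I)" for I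
  proof -
    have "(\<Sum>p\<in>P. c p * T_q P q p I) = (\<Sum>p\<in>insert m D. c p * T_q P q p I)"
      by (rule sum.mono_neutral_right[OF assms(1) \<open>insert m D \<subseteq> P\<close>])
        (use maximal in \<open>auto simp: D_def\<close>)
    also have "\<dots> = c m * T_q P q m I + (\<Sum>p\<in>D. c p * T_q D q p I)"
      using \<open>finite D\<close> \<open>m \<notin> D\<close> T_q_restrict[OF D] by simp
    finally show ?thesis .
  qed
  have "0 = ideal_weighted_sum D q (\<lambda>I. \<Sum>p\<in>P. c p * T_q P q p I)"
    using vanish order_ideals_mono[OF D] by (auto simp: ideal_weighted_sum_def intro!: sum.neutral)
  also have "\<dots> = ideal_weighted_sum D q (\<lambda>I. c m * T_q P q m I + (\<Sum>p\<in>D. c p * T_q D q p I))"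
    by (simp add: split)
  also have "\<dots> = c m * ideal_weighted_sum D q (T_q P q m)
      + ideal_weighted_sum D q (\<lambda>I. \<Sum>p\<in>D. c p * T_q D q p I)"
    by (simp add: ideal_weighted_sum_def sum.distrib sum_distrib_left algebra_simps)
  also have "\<dots> = c m * ideal_weighted_sum D q (T_q P q m)"
    by (simp add: ideal_weighted_sum_linear_combination ideal_weighted_sum_T_q[OF \<open>finite D\<close> assms(2)])
  finally have "c m * ideal_weighted_sum D q (T_q P q m) = 0" ..
  moreover have "ideal_weighted_sum D q (T_q P q m) > 0"
  proof (rule ideal_weighted_sum_pos[OF \<open>finite D\<close> assms(2)])
    show "T_q P q m I \<ge> 0" if "I \<in> order_ideals D" for I
      using that \<open>m \<notin> D\<close> by (auto simp: order_ideals_def intro: T_q_nonneg)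
    show "{y \<in> D. y < m} \<in> order_ideals D"
      by (rule below_in_order_ideals)
    have "{y \<in> D. y < m} = {y \<in> P. y < m}"
      by (auto simp: D_def)
    then show "T_q P q m {y \<in> D. y < m} > 0"
      using T_q_below[OF m(1)] by simp
  qed
  ultimately show False
    using m(2) by simp
qed

lemma const_not_in_span_T_q:
  fixes q :: real
  assumes "finite P" and "q > 0"
  shows "\<not> (\<exists>c. \<forall>I\<in>order_ideals P. (\<Sum>p\<in>P. c p * T_q P q p I) = 1)"
proof
  assume "\<exists>c. \<forall>I\<in>order_ideals P. (\<Sum>p\<in>P. c p * T_q P q p I) = 1"
  then obtain c where one: "\<forall>I\<in>order_ideals P. (\<Sum>p\<in>P. c p * T_q P q p I) = 1" ..
  have "{} \<in> order_ideals P"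
    by (simp add: order_ideals_def)
  then have "ideal_weighted_sum P q (\<lambda>I. \<Sum>p\<in>P. c p * T_q P q p I) > 0"
    using one by (intro ideal_weighted_sum_pos[OF assms]) auto
  moreover have "ideal_weighted_sum P q (\<lambda>I. \<Sum>p\<in>P. c p * T_q P q p I) = 0"
    by (simp add: ideal_weighted_sum_linear_combination ideal_weighted_sum_T_q[OF assms])
  ultimately show False
    by simp
qed

lemma T_plus_linear_independent:
  fixes c :: "'a::order \<Rightarrow> real"
  assumes "finite P" and vanish: "\<forall>I\<in>order_ideals P. (\<Sum>p\<in>P. c p * T_plus P p I) = 0"
  shows "\<forall>p\<in>P. c p = 0"
proof
  fix p assume "p \<in> P"
  have "(\<Sum>p'\<in>P. c p' * T_plus P p' {y \<in> P. \<not> p \<le> y}) = 0"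
    using vanish not_above_in_order_ideals by blast
  moreover have "(\<Sum>p'\<in>P. c p' * T_plus P p' {y \<in> P. \<not> p \<le> y}) = c p"
    using assms(1) \<open>p \<in> P\<close> by (simp add: T_plus_not_above if_distrib sum.delta' cong: if_cong)
  ultimately show "c p = 0"
    by simp
qed

lemma const_not_in_span_T_plus:
  "\<not> (\<exists>c. \<forall>I\<in>order_ideals P. (\<Sum>p\<in>P. c p * T_plus P p I) = 1)"
proof
  assume "\<exists>c. \<forall>I\<in>order_ideals P. (\<Sum>p\<in>P. c p * T_plus P p I) = 1"
  moreover have "P \<in> order_ideals P"
    by (simp add: order_ideals_def)
  ultimately obtain c where "(\<Sum>p\<in>P. c p * T_plus P p P) = 1"
    by blast
  then show False
    by (simp add: T_plus_whole)
qed

theorem theorem2p7: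
  fixes P :: "'a::order set" and q :: real
  assumes "finite P" and "q \<ge> 0"
  shows "(\<forall>c :: 'a \<Rightarrow> real.
            (\<forall>I\<in>order_ideals P. (\<Sum>p\<in>P. c p * T_q P q p I) = 0) \<longrightarrow> (\<forall>p\<in>P. c p = 0))
       \<and> \<not> (\<exists>c :: 'a \<Rightarrow> real. \<forall>I\<in>order_ideals P. (\<Sum>p\<in>P. c p * T_q P q p I) = 1)"
proof (cases "q = 0")
  case True
  then have "T_q P q = T_plus P"
    by (simp add: fun_eq_iff T_q_def)
  then show ?thesis
    using T_plus_linear_independent[OF assms(1)] const_not_in_span_T_plus by simp
next
  case False
  with assms(2) have "q > 0"
    by simp
  then show ?thesis
    using T_q_linear_independent[OF assms(1)] const_not_in_span_T_q[OF assms(1)] by blast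
qed

end
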